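(* (i) The set of symplectic formal power series is a subalgebra of $\mathbb{C}[[x]]$. (ii) A meromorphic function $\psi(t)$ is symplectic of order $d$ at $a\in\mathbb{C}$ if and only if there exists a formal power series $\rho(y)\in\mathbb{C}[[y]]$ such that the Laurent expansion of $\psi(t)$ at $t=a$ equals $\frac{1}{(a-t)^d}\,\rho\!\left(\frac{(a-t)^2}{1-a+t}\right)$. (iii) If $\psi_1(t)$ is symplectic at $a\in\mathbb{C}$ of order $d_1$ and $\psi_2(t)$ is symplectic at $a$ of order $d_2$, then $\psi_1(t)\psi_2(t)$ is symplectic at $a$ of order $d_1+d_2$.
   Context: A formal power series $\varphi(x)=\sum_{i\ge0}\gamma_i x^i\in\mathbb{C}[[x]]$ is called symplectic if for every $m\ge1$ one has $\sum_{k=0}^{m-1}(-1)^k\binom{m-1}{k}\gamma_{m+k}=0$. A meromorphic function $\psi(t)$ whose pole at $t=a$ has order at most $d\in\mathbb{Z}$ is called symplectic at $a$ of order $d$ if the formal power series $x^d\psi(a-x)\in\mathbb{C}[[x]]$ is symplectic. In (ii) the expression is understood as a formal Laurent series in the variable $x=a-t$, with $\frac{(a-t)^2}{1-a+t}=\frac{x^2}{1-x}$. *)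

theory Defs
  imports "HOL-Complex_Analysis.Complex_Analysis"
begin

definition symplectic_fps :: "complex fps \<Rightarrow> bool" where
  "symplectic_fps \<phi> \<longleftrightarrow>
     (\<forall>m::nat. m \<ge> 1 \<longrightarrow>
        (\<Sum>k<m. (-1)^k * of_nat ((m - 1) choose k) * fps_nth \<phi> (m + k)) = 0)"

text \<open>psi is symplectic at a of order d: psi(a - x) has a Laurent expansion F at x = 0
  (i.e. psi is meromorphic at a), its pole at a has order at most d (x^d F is a power series),
  and the power series x^d psi(a - x) is symplectic.\<close>
definition symplectic_at :: "(complex \<Rightarrow> complex) \<Rightarrow> complex \<Rightarrow> int \<Rightarrow> bool" where
  "symplectic_at \<psi> a d \<longleftrightarrow>
     (\<exists>F. (\<lambda>x. \<psi> (a - x)) has_laurent_expansion F \<and>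
          fls_subdegree (fls_X_intpow d * F) \<ge> 0 \<and>
          symplectic_fps (fls_regpart (fls_X_intpow d * F)))"

end

theory Submission
  imports Defs
begin

text \<open>
  The m-th symplectic condition says that the coefficient of x^(2m-1) in (x-1)^(m-1) \<phi>(x)
  vanishes. With Y = x^2/(1-x) one has Y (x-1) = -x^2, so for i < m the product
  (x-1)^(m-1) Y^i is \<plusminus>x^(2i) times a polynomial of degree m-1-i, hence has degree < 2m-1,
  while Y^i starts with x^(2i) \<ge> x^(2m) for i \<ge> m; so every \<rho>(Y) is symplectic. Conversely
  the m-th condition expresses the coefficient of x^(2m-1) through lower ones, so a symplectic
  series is determined by its even coefficients, and these can be matched by some \<rho>(Y)
  because Y^j = x^(2j) + \<dots>. Thus the symplectic series form the image of the ring
  homomorphism \<rho> \<mapsto> \<rho>(Y), which gives (i); (ii) and (iii) are the same statements after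
  multiplying Laurent expansions by (a-t)^d.
\<close>

unbundle no vec_syntax

lemma fps_X_minus_one_power_nth:
  "((fps_X - 1 :: 'a :: comm_ring_1 fps) ^ n) $ j =
     (if j \<le> n then (-1) ^ (n - j) * of_nat (n choose j) else 0)"
proof -
  have "(fps_X - 1 :: 'a fps) ^ n = (\<Sum>k\<le>n. fps_const ((-1) ^ (n - k) * of_nat (n choose k)) * fps_X ^ k)"
    using binomial_ring[of "fps_X :: 'a fps" "-1" n]
    by (simp add: ac_simps flip: fps_const_power fps_const_neg fps_const_mult fps_of_nat)
  also have "\<dots> $ j = (\<Sum>k\<le>n. if j = k then (-1) ^ (n - k) * of_nat (n choose k) else 0)"
    unfolding fps_sum_nth by (intro sum.cong refl) (simp add: fps_X_power_nth)
  finally show ?thesis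
    by (simp only: sum.delta' finite_atMost atMost_iff)
qed

lemma neg_one_power_fps: "(-1 :: 'a :: comm_ring_1 fps) ^ n = fps_const ((-1) ^ n)"
proof -
  have "(-1 :: 'a fps) = fps_const (-1)" by simp
  then show ?thesis by (simp only: fps_const_power)
qed

lemma fps_cutoff_conv_sum:
  "fps_cutoff n f = (\<Sum>i<n. fps_const (f $ i) * fps_X ^ i :: 'a :: comm_ring_1 fps)"
  by (rule fps_ext) (simp add: fps_sum_nth fps_X_power_nth mult_delta_right sum.delta)

lemma fls_X_intpow_neg_mult_cancel:
  "fls_X_intpow (- d) * (fls_X_intpow d * F) = (F :: 'a :: comm_ring_1 fls)"
  by (simp only: mult.assoc[symmetric] fls_X_intpow_times_fls_X_intpow) simp

lemma symplectic_sum_eq_coeff: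
  fixes \<phi> :: "'a :: comm_ring_1 fps"
  shows "(\<Sum>k<Suc n. (-1) ^ k * of_nat (n choose k) * \<phi> $ (Suc n + k)) =
         ((fps_X - 1) ^ n * \<phi>) $ (2 * n + 1)"
proof -
  let ?Q = "(fps_X - 1 :: 'a fps) ^ n"
  have "((fps_X - 1) ^ n * \<phi>) $ (2 * n + 1) = (\<Sum>i=0..2*n+1. ?Q $ i * \<phi> $ (2 * n + 1 - i))"
    by (rule fps_mult_nth)
  also have "\<dots> = (\<Sum>i=0..n. ?Q $ i * \<phi> $ (2 * n + 1 - i))"
    by (rule sum.mono_neutral_right) (simp_all add: fps_X_minus_one_power_nth)
  also have "\<dots> = (\<Sum>i=0..n. ?Q $ (n - i) * \<phi> $ (Suc n + i))"
    by (subst sum.atLeastAtMost_rev) (intro sum.cong refl, simp add: Suc_diff_le)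
  also have "\<dots> = (\<Sum>k<Suc n. (-1) ^ k * of_nat (n choose k) * \<phi> $ (Suc n + k))"
    unfolding atLeast0AtMost lessThan_Suc_atMost
  proof (intro sum.cong refl)
    fix k assume "k \<in> {..n}"
    then have "n - (n - k) = k" and "n choose (n - k) = n choose k"
      by (auto simp flip: binomial_symmetric)
    then show "?Q $ (n - k) * \<phi> $ (Suc n + k) = (-1) ^ k * of_nat (n choose k) * \<phi> $ (Suc n + k)"
      by (simp add: fps_X_minus_one_power_nth)
  qed
  finally show ?thesis ..
qed

lemma symplectic_fps_iff_coeff:
  "symplectic_fps \<phi> \<longleftrightarrow> (\<forall>n. ((fps_X - 1) ^ n * \<phi>) $ (2 * n + 1) = 0)"
proof -
  have "(\<forall>m::nat. m \<ge> 1 \<longrightarrow> P m) \<longleftrightarrow> (\<forall>n. P (Suc n))" for P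
    by (auto simp: Suc_le_eq gr0_conv_Suc)
  then show ?thesis
    unfolding symplectic_fps_def by (simp only: symplectic_sum_eq_coeff diff_Suc_1)
qed

lemma symplectic_fps_add: "symplectic_fps f \<Longrightarrow> symplectic_fps g \<Longrightarrow> symplectic_fps (f + g)"
  by (simp add: symplectic_fps_iff_coeff distrib_left)

lemma symplectic_fps_diff: "symplectic_fps f \<Longrightarrow> symplectic_fps g \<Longrightarrow> symplectic_fps (f - g)"
  by (simp add: symplectic_fps_iff_coeff right_diff_distrib)

lemma symplectic_fps_const_mult: "symplectic_fps f \<Longrightarrow> symplectic_fps (fps_const c * f)"
  by (simp add: symplectic_fps_iff_coeff mult.left_commute[of _ "fps_const c"])

definition sympl_Y :: "complex fps" where
  "sympl_Y = fps_X ^ 2 / (1 - fps_X)"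

lemma sympl_Y_power: "sympl_Y ^ i = fps_X ^ (2 * i) * inverse (1 - fps_X) ^ i"
  by (simp add: sympl_Y_def fps_divide_unit power_mult_distrib power_mult)

lemma sympl_Y_nth_0: "sympl_Y $ 0 = 0"
  by (simp add: sympl_Y_def fps_divide_unit)

lemma sympl_Y_power_mult_nth_less: "n < 2 * i \<Longrightarrow> (sympl_Y ^ i * f) $ n = 0"
  by (simp add: sympl_Y_power mult.assoc fps_X_power_mult_nth)

lemma sympl_Y_power_nth_double: "(sympl_Y ^ i) $ (2 * i) = 1"
  by (simp add: sympl_Y_power fps_X_power_mult_nth fps_nth_power_0)

lemma sympl_Y_times_X_minus_one: "sympl_Y * (fps_X - 1) = - (fps_X ^ 2)"
proof -
  have "sympl_Y * (1 - fps_X) = fps_X ^ 2"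
    by (simp add: sympl_Y_def fps_divide_unit mult.assoc inverse_mult_eq_1)
  then show ?thesis
    by (metis minus_diff_eq mult_minus_right)
qed

lemma X_minus_one_power_mult_sympl_Y_power_nth:
  assumes "i \<le> n"
  shows "((fps_X - 1) ^ n * sympl_Y ^ i) $ (2 * n + 1) = 0"
proof -
  have "(fps_X - 1) ^ n * sympl_Y ^ i = (sympl_Y * (fps_X - 1)) ^ i * (fps_X - 1) ^ (n - i)"
    using assms by (simp add: power_mult_distrib mult.commute flip: power_add)
  also have "\<dots> = fps_const ((-1) ^ i) * (fps_X ^ (2 * i) * (fps_X - 1) ^ (n - i))"
    by (simp only: sympl_Y_times_X_minus_one power_minus[of "fps_X ^ 2"] neg_one_power_fps
        power_mult mult.assoc)
  finally show ?thesis
    using assms by (simp add: fps_X_power_mult_nth fps_X_minus_one_power_nth)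
qed

lemma symplectic_fps_compose_sympl_Y: "symplectic_fps (\<rho> oo sympl_Y)"
  unfolding symplectic_fps_iff_coeff
proof
  fix n
  let ?Q = "(fps_X - 1 :: complex fps) ^ n"
  have "\<rho> oo sympl_Y = (fps_X ^ Suc n * fps_shift (Suc n) \<rho> + fps_cutoff (Suc n) \<rho>) oo sympl_Y"
    by (simp only: fps_shift_cutoff')
  also have "\<dots> = sympl_Y ^ Suc n * (fps_shift (Suc n) \<rho> oo sympl_Y) +
                   (\<Sum>i<Suc n. fps_const (\<rho> $ i) * sympl_Y ^ i)"
    by (simp add: fps_cutoff_conv_sum fps_compose_add_distrib fps_compose_sum_distrib
        fps_compose_mult_distrib fps_X_power_compose sympl_Y_nth_0)
  finally have "(?Q * (\<rho> oo sympl_Y)) $ (2 * n + 1) =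
      (sympl_Y ^ Suc n * (?Q * (fps_shift (Suc n) \<rho> oo sympl_Y))) $ (2 * n + 1) +
      (\<Sum>i<Suc n. \<rho> $ i * (?Q * sympl_Y ^ i) $ (2 * n + 1))"
    by (simp add: distrib_left sum_distrib_left mult.left_commute fps_sum_nth)
  also have "(sympl_Y ^ Suc n * (?Q * (fps_shift (Suc n) \<rho> oo sympl_Y))) $ (2 * n + 1) = 0"
    by (rule sympl_Y_power_mult_nth_less) simp
  also have "(\<Sum>i<Suc n. \<rho> $ i * (?Q * sympl_Y ^ i) $ (2 * n + 1)) = 0"
    using X_minus_one_power_mult_sympl_Y_power_nth by (intro sum.neutral) auto
  finally show "(?Q * (\<rho> oo sympl_Y)) $ (2 * n + 1) = 0"
    by simp
qed

text \<open>Solves \<open>(\<rho> oo sympl_Y) $ (2 * j) = \<phi> $ (2 * j)\<close> for the coefficients of \<open>\<rho>\<close>; the system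
  is triangular since \<open>sympl_Y ^ i\<close> starts with \<open>fps_X ^ (2 * i)\<close>.\<close>
function sympl_Y_preimage_nth :: "complex fps \<Rightarrow> nat \<Rightarrow> complex" where
  "sympl_Y_preimage_nth \<phi> j =
     \<phi> $ (2 * j) - (\<Sum>i<j. sympl_Y_preimage_nth \<phi> i * (sympl_Y ^ i) $ (2 * j))"
  by auto
termination by (relation "Wellfounded.measure snd") auto

declare sympl_Y_preimage_nth.simps [simp del]

lemma compose_sympl_Y_preimage_nth_double:
  "(Abs_fps (sympl_Y_preimage_nth \<phi>) oo sympl_Y) $ (2 * j) = \<phi> $ (2 * j)"
proof -
  let ?c = "\<lambda>i. sympl_Y_preimage_nth \<phi> i * (sympl_Y ^ i) $ (2 * j)"
  have "(Abs_fps (sympl_Y_preimage_nth \<phi>) oo sympl_Y) $ (2 * j) = sum ?c {0..2 * j}"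
    by (simp add: fps_compose_nth)
  also have "{0..2 * j} = {..<j} \<union> {j} \<union> {j<..2 * j}" by auto
  also have "sum ?c \<dots> = sum ?c {..<j} + ?c j + sum ?c {j<..2 * j}"
    by (subst sum.union_disjoint; auto)+
  finally have "(Abs_fps (sympl_Y_preimage_nth \<phi>) oo sympl_Y) $ (2 * j) =
      sum ?c {..<j} + ?c j + sum ?c {j<..2 * j}" .
  moreover have "sum ?c {j<..2 * j} = 0"
    using sympl_Y_power_mult_nth_less[where f = 1] by (intro sum.neutral) auto
  ultimately show ?thesis
    by (simp add: sympl_Y_power_nth_double sympl_Y_preimage_nth.simps[of \<phi> j])
qed

lemma symplectic_fps_eq_0_if_even_nth_0:
  assumes "symplectic_fps \<psi>" and "\<And>j. \<psi> $ (2 * j) = 0"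
  shows "\<psi> = 0"
proof -
  have "\<psi> $ n = 0" for n
  proof (induction n rule: less_induct)
    case (less n)
    show ?case
    proof (cases "even n")
      case True
      then show ?thesis using assms(2) by (auto elim: evenE)
    next
      case False
      define k where "k = n div 2"
      have n: "n = Suc k + k" using False unfolding k_def by presburger
      have "(\<Sum>i<k. (-1) ^ i * of_nat (k choose i) * \<psi> $ (Suc k + i)) = 0"
        using less n by (intro sum.neutral) auto
      moreover have "(\<Sum>i<Suc k. (-1) ^ i * of_nat (k choose i) * \<psi> $ (Suc k + i)) = 0"
        using assms(1) by (simp only: symplectic_sum_eq_coeff symplectic_fps_iff_coeff)
      ultimately show ?thesis
        by (simp add: n)
    qed
  qed
  then show ?thesis by (simp add: fps_ext)
qed

lemma symplectic_fps_iff_compose_sympl_Y: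
  "symplectic_fps \<phi> \<longleftrightarrow> (\<exists>\<rho>. \<phi> = \<rho> oo sympl_Y)"
proof
  assume "symplectic_fps \<phi>"
  then have "\<phi> - (Abs_fps (sympl_Y_preimage_nth \<phi>) oo sympl_Y) = 0"
    by (intro symplectic_fps_eq_0_if_even_nth_0 symplectic_fps_diff symplectic_fps_compose_sympl_Y)
       (simp_all add: compose_sympl_Y_preimage_nth_double)
  then show "\<exists>\<rho>. \<phi> = \<rho> oo sympl_Y" by auto
qed (auto simp: symplectic_fps_compose_sympl_Y)

lemma symplectic_fps_mult: "symplectic_fps f \<Longrightarrow> symplectic_fps g \<Longrightarrow> symplectic_fps (f * g)"
  by (auto simp: symplectic_fps_iff_compose_sympl_Y sympl_Y_nth_0
      simp flip: fps_compose_mult_distrib)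

lemma symplectic_fps_0: "symplectic_fps 0"
  using symplectic_fps_compose_sympl_Y[of 0] by simp

lemma symplectic_fps_1: "symplectic_fps 1"
  using symplectic_fps_compose_sympl_Y[of 1] by simp

lemma symplectic_at_iff_symplectic_fps:
  "symplectic_at \<psi> a d \<longleftrightarrow>
     (\<exists>\<phi>. symplectic_fps \<phi> \<and>
        (\<lambda>x. \<psi> (a - x)) has_laurent_expansion fls_X_intpow (- d) * fps_to_fls \<phi>)"
proof
  assume "symplectic_at \<psi> a d"
  then obtain F where F: "(\<lambda>x. \<psi> (a - x)) has_laurent_expansion F"
    and deg: "fls_subdegree (fls_X_intpow d * F) \<ge> 0"
    and sympl: "symplectic_fps (fls_regpart (fls_X_intpow d * F))"
    unfolding symplectic_at_def by blast
  have "F = fls_X_intpow (- d) * fps_to_fls (fls_regpart (fls_X_intpow d * F))"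
    using deg by (simp only: fls_regpart_to_fls_trivial fls_X_intpow_neg_mult_cancel)
  with F sympl show "\<exists>\<phi>. symplectic_fps \<phi> \<and>
      (\<lambda>x. \<psi> (a - x)) has_laurent_expansion fls_X_intpow (- d) * fps_to_fls \<phi>"
    by metis
next
  assume "\<exists>\<phi>. symplectic_fps \<phi> \<and>
      (\<lambda>x. \<psi> (a - x)) has_laurent_expansion fls_X_intpow (- d) * fps_to_fls \<phi>"
  then obtain \<phi> where "symplectic_fps \<phi>"
    and "(\<lambda>x. \<psi> (a - x)) has_laurent_expansion fls_X_intpow (- d) * fps_to_fls \<phi>"
    by blast
  moreover have "fls_X_intpow d * (fls_X_intpow (- d) * fps_to_fls \<phi>) = fps_to_fls \<phi>"
    using fls_X_intpow_neg_mult_cancel[of "- d"] by (simp only: minus_minus)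
  ultimately show "symplectic_at \<psi> a d"
    unfolding symplectic_at_def by (metis fls_subdegree_fls_to_fps_gt0 fls_regpart_fps_trivial)
qed

lemma symplectic_at_mult:
  assumes "symplectic_at \<psi>1 a d1" and "symplectic_at \<psi>2 a d2"
  shows "symplectic_at (\<lambda>t. \<psi>1 t * \<psi>2 t) a (d1 + d2)"
proof -
  obtain \<phi>1 \<phi>2 where "symplectic_fps \<phi>1" "symplectic_fps \<phi>2"
    and "(\<lambda>x. \<psi>1 (a - x)) has_laurent_expansion fls_X_intpow (- d1) * fps_to_fls \<phi>1"
    and "(\<lambda>x. \<psi>2 (a - x)) has_laurent_expansion fls_X_intpow (- d2) * fps_to_fls \<phi>2"
    using assms unfolding symplectic_at_iff_symplectic_fps by blast
  then have "(\<lambda>x. \<psi>1 (a - x) * \<psi>2 (a - x)) has_laurent_expansion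
      (fls_X_intpow (- d1) * fps_to_fls \<phi>1) * (fls_X_intpow (- d2) * fps_to_fls \<phi>2)"
    by (intro has_laurent_expansion_mult)
  also have "(fls_X_intpow (- d1) * fps_to_fls \<phi>1) * (fls_X_intpow (- d2) * fps_to_fls \<phi>2) =
      fls_X_intpow (- (d1 + d2)) * fps_to_fls (\<phi>1 * \<phi>2)"
  proof -
    have "fls_X_intpow (- (d1 + d2)) = (fls_X_intpow (- d1) * fls_X_intpow (- d2) :: complex fls)"
      by (simp only: fls_X_intpow_times_fls_X_intpow minus_add_distrib)
    then show ?thesis
      by (simp only: fls_times_fps_to_fls ac_simps)
  qed
  finally show ?thesis
    using \<open>symplectic_fps \<phi>1\<close> \<open>symplectic_fps \<phi>2\<close>
    unfolding symplectic_at_iff_symplectic_fps by (blast intro: symplectic_fps_mult)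
qed

theorem corollary1p5:
  shows "(symplectic_fps 0 \<and> symplectic_fps 1 \<and>
          (\<forall>f g (c::complex). symplectic_fps f \<and> symplectic_fps g \<longrightarrow>
             symplectic_fps (f + g) \<and> symplectic_fps (f * g) \<and>
             symplectic_fps (fps_const c * f)))
       \<and> (\<forall>(\<psi>::complex \<Rightarrow> complex) a d. \<psi> meromorphic_on {a} \<longrightarrow>
            (symplectic_at \<psi> a d \<longleftrightarrow>
              (\<exists>\<rho>::complex fps. (\<lambda>x. \<psi> (a - x)) has_laurent_expansion
                 (fls_X_intpow (- d) *
                  fps_to_fls (\<rho> oo (fps_X ^ 2 / (1 - fps_X)))))))
       \<and> (\<forall>(\<psi>1::complex \<Rightarrow> complex) \<psi>2 a d1 d2.
            symplectic_at \<psi>1 a d1 \<and> symplectic_at \<psi>2 a d2 \<longrightarrow>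
            symplectic_at (\<lambda>t. \<psi>1 t * \<psi>2 t) a (d1 + d2))"
proof (intro conjI allI impI)
  show "symplectic_fps 0" "symplectic_fps 1"
    by (fact symplectic_fps_0 symplectic_fps_1)+
next
  fix f g :: "complex fps" and c :: complex
  assume "symplectic_fps f \<and> symplectic_fps g"
  then show "symplectic_fps (f + g)" "symplectic_fps (f * g)" "symplectic_fps (fps_const c * f)"
    by (simp_all add: symplectic_fps_add symplectic_fps_mult symplectic_fps_const_mult)
next
  fix \<psi> :: "complex \<Rightarrow> complex" and a d
  show "symplectic_at \<psi> a d \<longleftrightarrow>
      (\<exists>\<rho>. (\<lambda>x. \<psi> (a - x)) has_laurent_expansion
         fls_X_intpow (- d) * fps_to_fls (\<rho> oo (fps_X ^ 2 / (1 - fps_X))))"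
    unfolding symplectic_at_iff_symplectic_fps symplectic_fps_iff_compose_sympl_Y sympl_Y_def
    by blast
next
  fix \<psi>1 \<psi>2 :: "complex \<Rightarrow> complex" and a d1 d2
  assume "symplectic_at \<psi>1 a d1 \<and> symplectic_at \<psi>2 a d2"
  then show "symplectic_at (\<lambda>t. \<psi>1 t * \<psi>2 t) a (d1 + d2)"
    by (simp add: symplectic_at_mult)
qed

end
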